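(* If a closure model $\mathcal{M}=((X,\mathcal{C}_R),\mathcal{V})$ is quasi-discrete, finitely closed and finitely backward closed, then for all $x_1,x_2\in X$: $x_1\simeq x_2$ iff $x_1\equiv_{SLCS}x_2$.
   Context: Quasi-discrete closure model: $\mathcal{C}_R(A)=A\cup\{x\mid\exists a\in A.\ aRx\}$, $\vec{\mathcal{C}}(x)=\mathcal{C}_R(\{x\})$, $\overleftarrow{\mathcal{C}}(x)=\mathcal{C}_{R^{-1}}(\{x\})$, $\mathcal{V}:AP\to\mathcal{P}(X)$, $\mathcal{V}^{-1}(x)=\{p\mid x\in\mathcal{V}(p)\}$; finitely (backward) closed: every $\vec{\mathcal{C}}(x)$ (resp. $\overleftarrow{\mathcal{C}}(x)$) is finite. Path: $\pi:\mathbb{N}\to X$ with $\pi[\mathcal{C}_{succ}(N)]\subseteq\mathcal{C}_R(\pi[N])$ for all $N\subseteq\mathbb{N}$, $\mathcal{C}_{succ}$ the closure based on $n\mapsto n+1$. SLCS: $\Phi::=p\mid\neg\Phi\mid\Phi\lor\Phi\mid\vec\rho\,\Phi_1[\Phi_2]\mid\overleftarrow\rho\,\Phi_1[\Phi_2]$; $x\models\vec\rho\,\Phi_1[\Phi_2]$ iff some path $\pi$ and $\ell$ have $\pi(0)=x$, $\pi(\ell)\models\Phi_1$, $\pi(j)\models\Phi_2$ for $0<j<\ell$; $x\models\overleftarrow\rho\,\Phi_1[\Phi_2]$ iff some path $\pi$ and $\ell$ have $\pi(\ell)=x$, $\pi(0)\models\Phi_1$, $\pi(j)\models\Phi_2$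 for $0<j<\ell$. $\equiv_{SLCS}$: same SLCS formulas. $\simeq$: union of all non-empty equivalence relations $B$ with $(x_1,x_2)\in B\Rightarrow\mathcal{V}^{-1}(x_1)=\mathcal{V}^{-1}(x_2)$ and for all $C\in X/B$, $\vec{\mathcal{C}}(x_1)\cap C\neq\emptyset\iff\vec{\mathcal{C}}(x_2)\cap C\neq\emptyset$ and $\overleftarrow{\mathcal{C}}(x_1)\cap C\neq\emptyset\iff\overleftarrow{\mathcal{C}}(x_2)\cap C\neq\emptyset$. *)

theory Defs
  imports Main
begin

text \<open>Quasi-discrete closure model: carrier is the type 'a (X), closure given by a
relation R, valuation V :: 'p => 'a set (AP = type 'p).\<close>

definition clR :: "('a \<times> 'a) set \<Rightarrow> 'a set \<Rightarrow> 'a set" where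
  "clR R A = A \<union> {x. \<exists>a\<in>A. (a, x) \<in> R}"

definition fwdC :: "('a \<times> 'a) set \<Rightarrow> 'a \<Rightarrow> 'a set" where
  "fwdC R x = clR R {x}"

definition bwdC :: "('a \<times> 'a) set \<Rightarrow> 'a \<Rightarrow> 'a set" where
  "bwdC R x = clR (R\<inverse>) {x}"

definition Vinv :: "('p \<Rightarrow> 'a set) \<Rightarrow> 'a \<Rightarrow> 'p set" where
  "Vinv V x = {p. x \<in> V p}"

definition finitely_closed :: "('a \<times> 'a) set \<Rightarrow> bool" where
  "finitely_closed R \<longleftrightarrow> (\<forall>x. finite (fwdC R x))"

definition finitely_backward_closed :: "('a \<times> 'a) set \<Rightarrow> bool" where
  "finitely_backward_closed R \<longleftrightarrow> (\<forall>x. finite (bwdC R x))"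

definition succ_rel :: "(nat \<times> nat) set" where
  "succ_rel = {(n, m). m = Suc n}"

definition is_path :: "('a \<times> 'a) set \<Rightarrow> (nat \<Rightarrow> 'a) \<Rightarrow> bool" where
  "is_path R \<pi> \<longleftrightarrow> (\<forall>N. \<pi> ` (clR succ_rel N) \<subseteq> clR R (\<pi> ` N))"

datatype 'p slcs =
    Atom 'p
  | Neg "'p slcs"
  | Disj "'p slcs" "'p slcs"
  | RhoF "'p slcs" "'p slcs"
  | RhoB "'p slcs" "'p slcs"

fun sat :: "('a \<times> 'a) set \<Rightarrow> ('p \<Rightarrow> 'a set) \<Rightarrow> 'a \<Rightarrow> 'p slcs \<Rightarrow> bool" where
  "sat R V x (Atom p) = (x \<in> V p)"
| "sat R V x (Neg \<phi>) = (\<not> sat R V x \<phi>)"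
| "sat R V x (Disj \<phi> \<psi>) = (sat R V x \<phi> \<or> sat R V x \<psi>)"
| "sat R V x (RhoF \<phi>1 \<phi>2) =
     (\<exists>\<pi> l. is_path R \<pi> \<and> \<pi> 0 = x \<and> sat R V (\<pi> l) \<phi>1 \<and>
            (\<forall>j. 0 < j \<and> j < l \<longrightarrow> sat R V (\<pi> j) \<phi>2))"
| "sat R V x (RhoB \<phi>1 \<phi>2) =
     (\<exists>\<pi> l. is_path R \<pi> \<and> \<pi> l = x \<and> sat R V (\<pi> 0) \<phi>1 \<and>
            (\<forall>j. 0 < j \<and> j < l \<longrightarrow> sat R V (\<pi> j) \<phi>2))"

definition slcs_equiv :: "('a \<times> 'a) set \<Rightarrow> ('p \<Rightarrow> 'a set) \<Rightarrow> 'a \<Rightarrow> 'a \<Rightarrow> bool" where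
  "slcs_equiv R V x1 x2 \<longleftrightarrow> (\<forall>\<phi>. sat R V x1 \<phi> \<longleftrightarrow> sat R V x2 \<phi>)"

definition is_cmb :: "('a \<times> 'a) set \<Rightarrow> ('p \<Rightarrow> 'a set) \<Rightarrow> ('a \<times> 'a) set \<Rightarrow> bool" where
  "is_cmb R V B \<longleftrightarrow> B \<noteq> {} \<and> equiv UNIV B \<and>
     (\<forall>(x1, x2) \<in> B. Vinv V x1 = Vinv V x2 \<and>
        (\<forall>C \<in> UNIV // B.
           (fwdC R x1 \<inter> C \<noteq> {} \<longleftrightarrow> fwdC R x2 \<inter> C \<noteq> {}) \<and>
           (bwdC R x1 \<inter> C \<noteq> {} \<longleftrightarrow> bwdC R x2 \<inter> C \<noteq> {})))"

definition cmb_equiv :: "('a \<times> 'a) set \<Rightarrow> ('p \<Rightarrow> 'a set) \<Rightarrow> ('a \<times> 'a) set" where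
  "cmb_equiv R V = \<Union> {B. is_cmb R V B}"

end

theory Submission
  imports Defs
begin

text \<open>Bisimilar points satisfy the same formulas: a path witnessing a reachability formula
can be transferred step by step along the bisimulation, forwards for \<open>RhoF\<close> and backwards
for \<open>RhoB\<close>. Conversely, logical equivalence is itself a bisimulation. If \<open>x \<equiv> y\<close> and some
neighbour of \<open>x\<close> lies in the class of \<open>c\<close> while no neighbour of \<open>y\<close> does, then each of the
finitely many neighbours of \<open>y\<close> is separated from \<open>c\<close> by a formula; their conjunction \<open>\<Phi>\<close>
holds at \<open>c\<close> but at no neighbour of \<open>y\<close>, so \<open>\<rho> \<Phi>[\<bottom>]\<close> distinguishes \<open>x\<close> from \<open>y\<close>.\<close>

lemma fwdC_iff [simp]: "y \<in> fwdC R x \<longleftrightarrow> y = x \<or> (x, y) \<in> R"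
  by (auto simp: fwdC_def clR_def)

lemma bwdC_iff [simp]: "y \<in> bwdC R x \<longleftrightarrow> y = x \<or> (y, x) \<in> R"
  by (auto simp: bwdC_def clR_def)

lemma fwdC_iff_bwdC: "y \<in> fwdC R x \<longleftrightarrow> x \<in> bwdC R y"
  by auto

lemma is_path_iff: "is_path R \<pi> \<longleftrightarrow> (\<forall>n. \<pi> (Suc n) \<in> fwdC R (\<pi> n))"
proof
  assume "is_path R \<pi>"
  show "\<forall>n. \<pi> (Suc n) \<in> fwdC R (\<pi> n)"
  proof
    fix n
    have "\<pi> ` clR succ_rel {n} \<subseteq> clR R (\<pi> ` {n})"
      using \<open>is_path R \<pi>\<close> unfolding is_path_def by blast
    then show "\<pi> (Suc n) \<in> fwdC R (\<pi> n)"
      by (auto simp: clR_def succ_rel_def fwdC_def)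
  qed
next
  assume steps: "\<forall>n. \<pi> (Suc n) \<in> fwdC R (\<pi> n)"
  show "is_path R \<pi>"
    unfolding is_path_def
  proof (intro allI subsetI)
    fix N y
    assume "y \<in> \<pi> ` clR succ_rel N"
    then obtain m where m: "y = \<pi> m" "m \<in> N \<or> (\<exists>n\<in>N. m = Suc n)"
      by (auto simp: clR_def succ_rel_def)
    then show "y \<in> clR R (\<pi> ` N)"
      using steps by (auto simp: clR_def)
  qed
qed

lemma path_step: "is_path R \<pi> \<Longrightarrow> \<pi> (Suc n) \<in> fwdC R (\<pi> n)"
  by (simp add: is_path_iff)

lemma is_path_stop:
  assumes "\<And>j. j < l \<Longrightarrow> \<pi> (Suc j) \<in> fwdC R (\<pi> j)"
  shows "is_path R (\<lambda>n. \<pi> (min n l))"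
  unfolding is_path_iff
proof
  fix n
  show "\<pi> (min (Suc n) l) \<in> fwdC R (\<pi> (min n l))"
    using assms[of n] by (cases "n < l") (auto simp: min_def)
qed

lemma is_path_const: "is_path R (\<lambda>_. x)"
  by (simp add: is_path_iff)

lemma is_path_two_points: "b \<in> fwdC R a \<Longrightarrow> is_path R (\<lambda>n. if n = 0 then a else b)"
  by (auto simp: is_path_iff)

subsection \<open>Bisimilar points are logically equivalent\<close>

lemma quotient_match:
  assumes "equiv UNIV B"
    and "\<forall>C \<in> UNIV // B. A \<inter> C \<noteq> {} \<longleftrightarrow> A' \<inter> C \<noteq> {}"
    and "a \<in> A"
  shows "\<exists>a'\<in>A'. (a, a') \<in> B"
proof -
  have "B `` {a} \<in> UNIV // B" by (rule quotientI) simp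
  moreover have "a \<in> B `` {a}"
    using assms(1) by (simp add: equiv_def refl_on_def)
  ultimately have "A' \<inter> B `` {a} \<noteq> {}"
    using assms(2,3) by blast
  then show ?thesis
    using assms(1) by (auto elim: equivE dest: symD)
qed

lemma cmb_equiv_rel: "is_cmb R V B \<Longrightarrow> equiv UNIV B"
  by (simp add: is_cmb_def)

lemma cmb_sym: "is_cmb R V B \<Longrightarrow> (x, y) \<in> B \<Longrightarrow> (y, x) \<in> B"
  by (auto simp: is_cmb_def equiv_def dest: symD)

lemma cmb_fwd_match:
  assumes "is_cmb R V B" "(x, y) \<in> B" "x' \<in> fwdC R x"
  shows "\<exists>y'\<in>fwdC R y. (x', y') \<in> B"
proof (rule quotient_match[OF cmb_equiv_rel[OF assms(1)] _ assms(3)])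
  show "\<forall>C \<in> UNIV // B. fwdC R x \<inter> C \<noteq> {} \<longleftrightarrow> fwdC R y \<inter> C \<noteq> {}"
    using assms(1,2) unfolding is_cmb_def by fast
qed

lemma cmb_bwd_match:
  assumes "is_cmb R V B" "(x, y) \<in> B" "x' \<in> bwdC R x"
  shows "\<exists>y'\<in>bwdC R y. (x', y') \<in> B"
proof (rule quotient_match[OF cmb_equiv_rel[OF assms(1)] _ assms(3)])
  show "\<forall>C \<in> UNIV // B. bwdC R x \<inter> C \<noteq> {} \<longleftrightarrow> bwdC R y \<inter> C \<noteq> {}"
    using assms(1,2) unfolding is_cmb_def by fast
qed

lemma cmb_transfer_path_fwd:
  assumes "is_cmb R V B" "is_path R \<pi>" "(\<pi> 0, y) \<in> B"
  shows "\<exists>\<sigma>. is_path R \<sigma> \<and> \<sigma> 0 = y \<and> (\<forall>j\<le>l. (\<pi> j, \<sigma> j) \<in> B)"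
proof (induction l)
  case 0
  show ?case
    using assms(3) is_path_const by (intro exI[of _ "\<lambda>_. y"]) simp
next
  case (Suc l)
  then obtain \<sigma> where \<sigma>: "is_path R \<sigma>" "\<sigma> 0 = y" "\<forall>j\<le>l. (\<pi> j, \<sigma> j) \<in> B"
    by blast
  obtain z where z: "z \<in> fwdC R (\<sigma> l)" "(\<pi> (Suc l), z) \<in> B"
    using cmb_fwd_match[OF assms(1)] \<sigma>(3) path_step[OF assms(2)] by blast
  define \<rho> where "\<rho> = \<sigma>(Suc l := z)"
  have "is_path R (\<lambda>n. \<rho> (min n (Suc l)))"
  proof (rule is_path_stop)
    fix j
    assume "j < Suc l"
    then show "\<rho> (Suc j) \<in> fwdC R (\<rho> j)"
      using z(1) path_step[OF \<sigma>(1), of j] by (cases "j = l") (simp_all add: \<rho>_def)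
  qed
  moreover have "\<forall>j\<le>Suc l. (\<pi> j, \<rho> (min j (Suc l))) \<in> B"
    using \<sigma>(3) z(2) by (auto simp: \<rho>_def le_Suc_eq)
  ultimately show ?case
    using \<sigma>(2) by (intro exI[of _ "\<lambda>n. \<rho> (min n (Suc l))"]) (simp add: \<rho>_def)
qed

lemma cmb_transfer_path_bwd:
  assumes "is_cmb R V B" "is_path R \<pi>"
  shows "(\<pi> l, y) \<in> B \<Longrightarrow> \<exists>\<sigma>. is_path R \<sigma> \<and> \<sigma> l = y \<and> (\<forall>j\<le>l. (\<pi> j, \<sigma> j) \<in> B)"
proof (induction l arbitrary: y)
  case 0
  then show ?case
    using is_path_const by (intro exI[of _ "\<lambda>_. y"]) simp
next
  case (Suc l)
  have "\<pi> l \<in> bwdC R (\<pi> (Suc l))"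
    using path_step[OF assms(2), of l] unfolding fwdC_iff_bwdC .
  then obtain z where z: "z \<in> bwdC R y" "(\<pi> l, z) \<in> B"
    using cmb_bwd_match[OF assms(1) Suc.prems] by blast
  then obtain \<sigma> where \<sigma>: "is_path R \<sigma>" "\<sigma> l = z" "\<forall>j\<le>l. (\<pi> j, \<sigma> j) \<in> B"
    using Suc.IH by blast
  define \<rho> where "\<rho> = \<sigma>(Suc l := y)"
  have last_step: "y \<in> fwdC R (\<sigma> l)"
    unfolding fwdC_iff_bwdC using z(1) \<sigma>(2) by simp
  have "is_path R (\<lambda>n. \<rho> (min n (Suc l)))"
  proof (rule is_path_stop)
    fix j
    assume "j < Suc l"
    then show "\<rho> (Suc j) \<in> fwdC R (\<rho> j)"
      using last_step path_step[OF \<sigma>(1), of j] by (cases "j = l") (simp_all add: \<rho>_def)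
  qed
  moreover have "\<forall>j\<le>Suc l. (\<pi> j, \<rho> (min j (Suc l))) \<in> B"
    using \<sigma>(3) Suc.prems by (auto simp: \<rho>_def le_Suc_eq)
  ultimately show ?case
    by (intro exI[of _ "\<lambda>n. \<rho> (min n (Suc l))"]) (simp add: \<rho>_def)
qed

lemma cmb_sat_iff:
  assumes B: "is_cmb R V B"
  shows "(x, y) \<in> B \<Longrightarrow> sat R V x \<phi> \<longleftrightarrow> sat R V y \<phi>"
proof (induction \<phi> arbitrary: x y)
  case (Atom p)
  then have "Vinv V x = Vinv V y"
    using B unfolding is_cmb_def by fast
  then show ?case by (auto simp: Vinv_def)
next
  case (RhoF \<phi>1 \<phi>2)
  have "sat R V y (RhoF \<phi>1 \<phi>2)"
    if xy: "(x, y) \<in> B" and "sat R V x (RhoF \<phi>1 \<phi>2)" for x y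
  proof -
    obtain \<pi> l where \<pi>: "is_path R \<pi>" "\<pi> 0 = x" "sat R V (\<pi> l) \<phi>1"
      "\<forall>j. 0 < j \<and> j < l \<longrightarrow> sat R V (\<pi> j) \<phi>2"
      using \<open>sat R V x (RhoF \<phi>1 \<phi>2)\<close> by auto
    obtain \<sigma> where \<sigma>: "is_path R \<sigma>" "\<sigma> 0 = y" "\<forall>j\<le>l. (\<pi> j, \<sigma> j) \<in> B"
      using cmb_transfer_path_fwd[OF B \<pi>(1)] \<pi>(2) xy by blast
    have "sat R V (\<sigma> l) \<phi>1"
      using RhoF.IH(1) \<sigma>(3) \<pi>(3) by blast
    moreover have "\<forall>j. 0 < j \<and> j < l \<longrightarrow> sat R V (\<sigma> j) \<phi>2"
      using RhoF.IH(2) \<sigma>(3) \<pi>(4) by (meson less_imp_le)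
    ultimately show ?thesis
      using \<sigma>(1,2) by auto
  qed
  then show ?case
    using RhoF.prems cmb_sym[OF B] by blast
next
  case (RhoB \<phi>1 \<phi>2)
  have "sat R V y (RhoB \<phi>1 \<phi>2)"
    if xy: "(x, y) \<in> B" and "sat R V x (RhoB \<phi>1 \<phi>2)" for x y
  proof -
    obtain \<pi> l where \<pi>: "is_path R \<pi>" "\<pi> l = x" "sat R V (\<pi> 0) \<phi>1"
      "\<forall>j. 0 < j \<and> j < l \<longrightarrow> sat R V (\<pi> j) \<phi>2"
      using \<open>sat R V x (RhoB \<phi>1 \<phi>2)\<close> by auto
    obtain \<sigma> where \<sigma>: "is_path R \<sigma>" "\<sigma> l = y" "\<forall>j\<le>l. (\<pi> j, \<sigma> j) \<in> B"
      using cmb_transfer_path_bwd[OF B \<pi>(1)] \<pi>(2) xy by blast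
    have "sat R V (\<sigma> 0) \<phi>1"
      using RhoB.IH(1) \<sigma>(3) \<pi>(3) by blast
    moreover have "\<forall>j. 0 < j \<and> j < l \<longrightarrow> sat R V (\<sigma> j) \<phi>2"
      using RhoB.IH(2) \<sigma>(3) \<pi>(4) by (meson less_imp_le)
    ultimately show ?thesis
      using \<sigma>(1,2) by auto
  qed
  then show ?case
    using RhoB.prems cmb_sym[OF B] by blast
qed simp_all

lemma cmb_equiv_imp_slcs_equiv: "(x, y) \<in> cmb_equiv R V \<Longrightarrow> slcs_equiv R V x y"
  by (auto simp: cmb_equiv_def slcs_equiv_def dest: cmb_sat_iff)

subsection \<open>Logical equivalence is a bisimulation\<close>

text \<open>Any atom works; the type of atoms is nonempty.\<close>

definition slcs_true :: "'p slcs" where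
  "slcs_true = Disj (Atom undefined) (Neg (Atom undefined))"

definition slcs_false :: "'p slcs" where
  "slcs_false = Neg slcs_true"

lemma sat_slcs_true [simp]: "sat R V x slcs_true"
  by (simp add: slcs_true_def)

lemma sat_slcs_false [simp]: "\<not> sat R V x slcs_false"
  by (simp add: slcs_false_def)

lemma sat_false_between_imp_le_1:
  fixes \<pi> :: "nat \<Rightarrow> 'a"
  assumes "\<forall>j. 0 < j \<and> j < l \<longrightarrow> sat R V (\<pi> j) slcs_false"
  shows "l = 0 \<or> l = 1"
proof (rule ccontr)
  assume "\<not> (l = 0 \<or> l = 1)"
  then have "0 < (1::nat) \<and> 1 < l" by arith
  then show False
    using assms by auto
qed

lemma sat_RhoF_false_iff:
  "sat R V x (RhoF \<Phi> slcs_false) \<longleftrightarrow> (\<exists>w\<in>fwdC R x. sat R V w \<Phi>)"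
proof
  assume "sat R V x (RhoF \<Phi> slcs_false)"
  then obtain \<pi> l where \<pi>: "is_path R \<pi>" "\<pi> 0 = x" "sat R V (\<pi> l) \<Phi>"
    and "\<forall>j. 0 < j \<and> j < l \<longrightarrow> sat R V (\<pi> j) slcs_false"
    by auto
  from this(4) have "l = 0 \<or> l = 1"
    by (rule sat_false_between_imp_le_1)
  moreover have "\<pi> 1 \<in> fwdC R x"
    using path_step[OF \<pi>(1), of 0] \<pi>(2) by simp
  ultimately show "\<exists>w\<in>fwdC R x. sat R V w \<Phi>"
    using \<pi>(2,3) by auto
next
  assume "\<exists>w\<in>fwdC R x. sat R V w \<Phi>"
  then obtain w where "w \<in> fwdC R x" "sat R V w \<Phi>" by blast
  moreover from this(1) have "is_path R (\<lambda>n. if n = 0 then x else w)"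
    by (rule is_path_two_points)
  ultimately show "sat R V x (RhoF \<Phi> slcs_false)"
    by (auto intro!: exI[of _ "\<lambda>n. if n = 0 then x else w"] exI[of _ 1])
qed

lemma sat_RhoB_false_iff:
  "sat R V x (RhoB \<Phi> slcs_false) \<longleftrightarrow> (\<exists>w\<in>bwdC R x. sat R V w \<Phi>)"
proof
  assume "sat R V x (RhoB \<Phi> slcs_false)"
  then obtain \<pi> l where \<pi>: "is_path R \<pi>" "\<pi> l = x" "sat R V (\<pi> 0) \<Phi>"
    and "\<forall>j. 0 < j \<and> j < l \<longrightarrow> sat R V (\<pi> j) slcs_false"
    by auto
  from this(4) have "l = 0 \<or> l = 1"
    by (rule sat_false_between_imp_le_1)
  moreover have "\<pi> 0 \<in> bwdC R (\<pi> 1)"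
    using path_step[OF \<pi>(1), of 0] unfolding fwdC_iff_bwdC by simp
  ultimately show "\<exists>w\<in>bwdC R x. sat R V w \<Phi>"
    using \<pi>(2,3) by auto
next
  assume "\<exists>w\<in>bwdC R x. sat R V w \<Phi>"
  then obtain w where "x \<in> fwdC R w" "sat R V w \<Phi>"
    unfolding fwdC_iff_bwdC by blast
  moreover from this(1) have "is_path R (\<lambda>n. if n = 0 then w else x)"
    by (rule is_path_two_points)
  ultimately show "sat R V x (RhoB \<Phi> slcs_false)"
    by (auto intro!: exI[of _ "\<lambda>n. if n = 0 then w else x"] exI[of _ 1])
qed

lemma slcs_separating_formula:
  assumes "finite S" "\<forall>z\<in>S. \<not> slcs_equiv R V c z"
  shows "\<exists>\<Phi>. sat R V c \<Phi> \<and> (\<forall>z\<in>S. \<not> sat R V z \<Phi>)"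
  using assms
proof (induction S rule: finite_induct)
  case empty
  show ?case by (intro exI[of _ slcs_true]) simp
next
  case (insert z S)
  then obtain \<Phi> where \<Phi>: "sat R V c \<Phi>" "\<forall>z\<in>S. \<not> sat R V z \<Phi>"
    by auto
  obtain \<psi> where "sat R V c \<psi> \<noteq> sat R V z \<psi>"
    using insert.prems by (auto simp: slcs_equiv_def)
  then obtain \<psi>' where \<psi>': "sat R V c \<psi>'" "\<not> sat R V z \<psi>'"
    by (metis sat.simps(2))
  show ?case
    using \<Phi> \<psi>' by (intro exI[of _ "Neg (Disj (Neg \<Phi>) (Neg \<psi>'))"]) auto
qed

text \<open>\<open>N\<close> is the forward or backward neighbourhood, \<open>M \<Phi>\<close> the formula \<open>\<rho> \<Phi>[\<bottom>]\<close> expressing it.\<close>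

lemma slcs_equiv_meets_class:
  assumes fin: "finite (N y)"
    and modal: "\<And>x \<Phi>. sat R V x (M \<Phi>) \<longleftrightarrow> (\<exists>w\<in>N x. sat R V w \<Phi>)"
    and xy: "slcs_equiv R V x y"
    and C: "C \<in> UNIV // {(x, y). slcs_equiv R V x y}"
    and meets: "N x \<inter> C \<noteq> {}"
  shows "N y \<inter> C \<noteq> {}"
proof
  assume disjoint: "N y \<inter> C = {}"
  obtain c where c: "C = {z. slcs_equiv R V c z}"
    using C by (auto elim: quotientE)
  obtain \<Phi> where \<Phi>: "sat R V c \<Phi>" "\<forall>z\<in>N y. \<not> sat R V z \<Phi>"
    using slcs_separating_formula[OF fin] disjoint c by blast
  have "sat R V x (M \<Phi>)"
    using meets c \<Phi>(1) modal by (auto simp: slcs_equiv_def)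
  then have "sat R V y (M \<Phi>)"
    using xy by (simp add: slcs_equiv_def)
  then show False
    using \<Phi>(2) modal by blast
qed

lemma slcs_equiv_is_cmb:
  assumes "finitely_closed R" "finitely_backward_closed R"
  shows "is_cmb R V {(x, y). slcs_equiv R V x y}"
proof -
  have sym: "slcs_equiv R V y x" if "slcs_equiv R V x y" for x y
    using that by (auto simp: slcs_equiv_def)
  have equiv: "equiv UNIV {(x, y). slcs_equiv R V x y}"
    by (auto simp: equiv_def refl_on_def sym_def trans_def slcs_equiv_def)
  have atoms: "Vinv V x = Vinv V y" if "slcs_equiv R V x y" for x y
    using that[unfolded slcs_equiv_def, rule_format, of "Atom _"] by (auto simp: Vinv_def)
  have fin: "finite (fwdC R x)" "finite (bwdC R x)" for x
    using assms by (auto simp: finitely_closed_def finitely_backward_closed_def)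
  have classes:
    "fwdC R x \<inter> C \<noteq> {} \<longleftrightarrow> fwdC R y \<inter> C \<noteq> {}"
    "bwdC R x \<inter> C \<noteq> {} \<longleftrightarrow> bwdC R y \<inter> C \<noteq> {}"
    if xy: "slcs_equiv R V x y" and C: "C \<in> UNIV // {(x, y). slcs_equiv R V x y}" for x y C
    using slcs_equiv_meets_class[OF fin(1) sat_RhoF_false_iff _ C]
      slcs_equiv_meets_class[OF fin(2) sat_RhoB_false_iff _ C] xy sym[OF xy]
    by blast+
  have "{(x, y). slcs_equiv R V x y} \<noteq> {}"
    by (auto simp: slcs_equiv_def)
  with equiv atoms classes show ?thesis
    unfolding is_cmb_def by fast
qed

theorem theorem2:
  fixes R :: "('a \<times> 'a) set" and V :: "'p \<Rightarrow> 'a set"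
  assumes "finitely_closed R" and "finitely_backward_closed R"
  shows "(x1, x2) \<in> cmb_equiv R V \<longleftrightarrow> slcs_equiv R V x1 x2"
proof
  show "(x1, x2) \<in> cmb_equiv R V \<Longrightarrow> slcs_equiv R V x1 x2"
    by (rule cmb_equiv_imp_slcs_equiv)
next
  assume "slcs_equiv R V x1 x2"
  then show "(x1, x2) \<in> cmb_equiv R V"
    using slcs_equiv_is_cmb[OF assms, of V] by (auto simp: cmb_equiv_def)
qed

end
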